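(* For every integer $n\ge8$, $\mathfrak{S}(G_n)<2^n$, where $G_n$ is the bipartite graph with parts $V_1=[n]$ and $V_2=[n]$ (two disjoint copies of $\{1,\dots,n\}$) and edge set $\{(a,b)\in V_1\times V_2:|a-b|=1\}$.
   Context: For a bipartite graph $G$ with parts $V_1,V_2$ whose vertices are labelled by integers (labels may be shared between the parts), $\mathfrak{S}(G)=\sum 2^{-|S_1\cup S_2|}$, the sum over all pairs $S_1\subseteq V_1$, $S_2\subseteq V_2$ with no edge of $G$ between $S_1$ and $S_2$; here $S_1\cup S_2$ is the union of the sets of labels (so a label appearing in both $S_1$ and $S_2$ is counted once). *)

theory Defs
  imports Complex_Main
begin

definition frakS :: "'a set \<Rightarrow> 'b set \<Rightarrow> ('a \<Rightarrow> 'b \<Rightarrow> bool) \<Rightarrow> ('a \<Rightarrow> int) \<Rightarrow> ('b \<Rightarrow> int) \<Rightarrow> real" where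
  "frakS V1 V2 E lab1 lab2 =
     (\<Sum>(S1, S2) \<in> {(S1, S2). S1 \<subseteq> V1 \<and> S2 \<subseteq> V2 \<and> (\<forall>a\<in>S1. \<forall>b\<in>S2. \<not> E a b)}.
        (1/2) ^ card (lab1 ` S1 \<union> lab2 ` S2))"

text \<open>G_n: both parts are copies of {1..n} (as separate arguments, hence disjoint), vertex
  labelled by itself, edges (a,b) with |a - b| = 1.\<close>

definition Gn_frakS :: "nat \<Rightarrow> real" where
  "Gn_frakS n = frakS {1..int n} {1..int n} (\<lambda>a b. \<bar>a - b\<bar> = 1) id id"

end

theory Submission
  imports Defs
begin

text \<open>Sweep the vertices 1, ..., n from left to right, sorting the admissible pairs (S1, S2) of
  subsets of {1..m} by whether m lies in S1 and in S2. The four partial sums so obtained evolve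
  by a linear transfer map, and the total over {1..n} is the first component after n + 1 steps.
  The transfer map has Perron eigenvalue about 1.948 < 2; after 9 steps the state is already
  close enough to the Perron direction that each further step at most doubles the total, and the
  total after 9 steps is 32065/128 < 2^8. (For n = 7 the total 8233/64 still exceeds 2^7.)\<close>

lemma sum_Pow_insert:
  assumes "a \<notin> A" "finite A"
  shows "(\<Sum>S\<in>Pow (insert a A). f S) = (\<Sum>S\<in>Pow A. f S + f (insert a S))"
proof -
  have "(\<Sum>S\<in>Pow (insert a A). f S) = (\<Sum>S\<in>Pow A \<union> insert a ` Pow A. f S)"
    by (simp add: Pow_insert)
  also have "\<dots> = (\<Sum>S\<in>Pow A. f S) + (\<Sum>S\<in>insert a ` Pow A. f S)"
    using assms by (intro sum.union_disjoint) auto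
  also have "(\<Sum>S\<in>insert a ` Pow A. f S) = (\<Sum>S\<in>Pow A. f (insert a S))"
    using assms(1) by (subst sum.reindex) (auto simp: inj_on_def)
  finally show ?thesis
    by (simp add: sum.distrib)
qed

definition separated :: "int set \<Rightarrow> int set \<Rightarrow> bool" where
  "separated S1 S2 \<longleftrightarrow> (\<forall>a\<in>S1. \<forall>b\<in>S2. \<bar>a - b\<bar> \<noteq> 1)"

lemma separated_insert_left:
  "separated (insert a S1) S2 \<longleftrightarrow> separated S1 S2 \<and> a - 1 \<notin> S2 \<and> a + 1 \<notin> S2"
proof -
  have "\<bar>a - b\<bar> = 1 \<longleftrightarrow> b = a - 1 \<or> b = a + 1" for b
    by arith
  then show ?thesis
    unfolding separated_def by auto
qed

lemma separated_insert_right: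
  "separated S1 (insert b S2) \<longleftrightarrow> separated S1 S2 \<and> b - 1 \<notin> S1 \<and> b + 1 \<notin> S1"
proof -
  have "\<bar>a - b\<bar> = 1 \<longleftrightarrow> a = b - 1 \<or> a = b + 1" for a
    by arith
  then show ?thesis
    unfolding separated_def by auto
qed

definition end_weight :: "nat \<Rightarrow> bool \<Rightarrow> bool \<Rightarrow> int set \<Rightarrow> int set \<Rightarrow> real" where
  "end_weight m x y S1 S2 =
     (if separated S1 S2 \<and> (int m \<in> S1 \<longleftrightarrow> x) \<and> (int m \<in> S2 \<longleftrightarrow> y)
      then (1/2) ^ card (S1 \<union> S2) else 0)"

definition end_sum :: "nat \<Rightarrow> bool \<Rightarrow> bool \<Rightarrow> real" where
  "end_sum m x y = (\<Sum>S1\<in>Pow {1..int m}. \<Sum>S2\<in>Pow {1..int m}. end_weight m x y S1 S2)"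

text \<open>The transfer matrix entry from end state (x', y') at m to end state (x, y) at m + 1:
  putting m + 1 into one side is forbidden if m lies on the other side, and a new label
  costs a factor 1/2.\<close>

definition transfer_coeff :: "bool \<Rightarrow> bool \<Rightarrow> bool \<Rightarrow> bool \<Rightarrow> real" where
  "transfer_coeff x' y' x y = (if x \<and> y' \<or> y \<and> x' then 0 else if x \<or> y then 1/2 else 1)"

lemma end_weight_Suc:
  assumes "S1 \<subseteq> {1..int m}" "S2 \<subseteq> {1..int m}"
  shows "end_weight (Suc m) x y
           (if x then insert (int (Suc m)) S1 else S1) (if y then insert (int (Suc m)) S2 else S2)
         = (\<Sum>x'\<in>UNIV. \<Sum>y'\<in>UNIV. transfer_coeff x' y' x y * end_weight m x' y' S1 S2)"
proof -
  have fresh: "int (Suc m) \<notin> S1" "int (Suc m) \<notin> S2"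
    "int (Suc m) + 1 \<notin> S1" "int (Suc m) + 1 \<notin> S2"
    using assms by auto
  have "finite (S1 \<union> S2)"
    using assms by (meson finite_Un finite_atLeastAtMost_int finite_subset)
  with fresh show ?thesis
    by (cases x; cases y)
      (auto simp: end_weight_def transfer_coeff_def UNIV_bool separated_insert_left
         separated_insert_right)
qed

lemma end_sum_Suc:
  "end_sum (Suc m) x y = (\<Sum>x'\<in>UNIV. \<Sum>y'\<in>UNIV. transfer_coeff x' y' x y * end_sum m x' y')"
proof -
  let ?A = "{1..int m}" and ?a = "int (Suc m)"
  let ?w = "end_weight (Suc m) x y"
  have ivl: "{1..int (Suc m)} = insert ?a ?A"
    by auto
  have "end_sum (Suc m) x y = (\<Sum>S1\<in>Pow ?A. \<Sum>S2\<in>Pow ?A.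
      ?w S1 S2 + ?w S1 (insert ?a S2) + ?w (insert ?a S1) S2 + ?w (insert ?a S1) (insert ?a S2))"
    unfolding end_sum_def ivl by (simp add: sum_Pow_insert sum.distrib algebra_simps)
  also have "\<dots> = (\<Sum>S1\<in>Pow ?A. \<Sum>S2\<in>Pow ?A.
      ?w (if x then insert ?a S1 else S1) (if y then insert ?a S2 else S2))"
    by (intro sum.cong refl) (cases x; cases y; auto simp: end_weight_def)
  also have "\<dots> = (\<Sum>S1\<in>Pow ?A. \<Sum>S2\<in>Pow ?A.
      \<Sum>x'\<in>UNIV. \<Sum>y'\<in>UNIV. transfer_coeff x' y' x y * end_weight m x' y' S1 S2)"
    by (intro sum.cong refl) (simp add: end_weight_Suc)
  also have "\<dots> = (\<Sum>x'\<in>UNIV. \<Sum>y'\<in>UNIV. transfer_coeff x' y' x y * end_sum m x' y')"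
    by (simp add: end_sum_def UNIV_bool sum.distrib sum_distrib_left)
  finally show ?thesis .
qed

lemma sum_end_weight:
  "(\<Sum>x\<in>UNIV. \<Sum>y\<in>UNIV. end_weight m x y S1 S2) =
     (if separated S1 S2 then (1/2) ^ card (S1 \<union> S2) else 0)"
  by (cases "int m \<in> S1"; cases "int m \<in> S2") (simp_all add: end_weight_def UNIV_bool)

lemma Gn_frakS_eq_end_sum: "Gn_frakS n = end_sum (Suc n) False False"
proof -
  let ?A = "{1..int n}"
  let ?w = "\<lambda>S1 S2. (1/2::real) ^ card (S1 \<union> S2)"
  have "Gn_frakS n = (\<Sum>(S1, S2)\<in>{p \<in> Pow ?A \<times> Pow ?A. separated (fst p) (snd p)}. ?w S1 S2)"
    unfolding Gn_frakS_def frakS_def separated_def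
    by (intro sum.cong) (auto simp: case_prod_beta)
  also have "\<dots> = (\<Sum>(S1, S2)\<in>Pow ?A \<times> Pow ?A. if separated S1 S2 then ?w S1 S2 else 0)"
    by (subst sum.inter_filter) (auto intro!: sum.cong split: prod.split)
  also have "\<dots> = (\<Sum>S1\<in>Pow ?A. \<Sum>S2\<in>Pow ?A. \<Sum>x\<in>UNIV. \<Sum>y\<in>UNIV. end_weight n x y S1 S2)"
    by (simp add: sum.cartesian_product[symmetric] sum_end_weight)
  also have "\<dots> = (\<Sum>x\<in>UNIV. \<Sum>y\<in>UNIV. end_sum n x y)"
    by (simp add: end_sum_def UNIV_bool sum.distrib)
  also have "\<dots> = end_sum (Suc n) False False"
    by (simp add: end_sum_Suc transfer_coeff_def)
  finally show ?thesis .
qed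

definition transfer :: "real \<times> real \<times> real \<times> real \<Rightarrow> real \<times> real \<times> real \<times> real" where
  "transfer = (\<lambda>(z, a, b, c). (z + a + b + c, (z + a) / 2, (z + b) / 2, z / 2))"

lemma funpow_transfer_eq_end_sums:
  "(transfer ^^ m) (1, 0, 0, 0) =
     (end_sum m False False, end_sum m True False, end_sum m False True, end_sum m True True)"
proof (induction m)
  case 0
  show ?case
    by (simp add: end_sum_def end_weight_def separated_def)
next
  case (Suc m)
  then show ?case
    by (simp add: end_sum_Suc transfer_def transfer_coeff_def UNIV_bool)
qed

text \<open>A cone around the Perron eigenvector (1, 0.345, 0.345, 0.257) of the transfer map; on it
  the first component grows at most by the factor 1 + 0.35 + 0.35 + 0.26 < 2.\<close>

definition perron_cone :: "real \<times> real \<times> real \<times> real \<Rightarrow> bool" where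
  "perron_cone = (\<lambda>(z, a, b, c). 0 < z
     \<and> 34/100 * z \<le> a \<and> a \<le> 35/100 * z
     \<and> 34/100 * z \<le> b \<and> b \<le> 35/100 * z
     \<and> 25/100 * z \<le> c \<and> c \<le> 26/100 * z)"

lemma perron_cone_transfer: "perron_cone t \<Longrightarrow> perron_cone (transfer t)"
  by (cases t) (simp add: perron_cone_def transfer_def)

lemma fst_transfer_le: "perron_cone t \<Longrightarrow> fst (transfer t) \<le> 2 * fst t"
  by (cases t) (simp add: perron_cone_def transfer_def)

lemma perron_cone_funpow_transfer: "perron_cone t \<Longrightarrow> perron_cone ((transfer ^^ k) t)"
  by (induction k) (simp_all add: perron_cone_transfer)

lemma fst_funpow_transfer_le:
  assumes "perron_cone t"
  shows "fst ((transfer ^^ k) t) \<le> 2 ^ k * fst t"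
proof (induction k)
  case 0
  show ?case by simp
next
  case (Suc k)
  have "fst ((transfer ^^ Suc k) t) \<le> 2 * fst ((transfer ^^ k) t)"
    using assms by (simp add: fst_transfer_le perron_cone_funpow_transfer)
  with Suc.IH show ?case
    by simp
qed

lemma funpow_transfer_9:
  "(transfer ^^ 9) (1, 0, 0, 0) = (32065/128, 44305/512, 44305/512, 8233/128)"
  by (simp add: transfer_def numeral_eq_Suc)

theorem mainTheorem14:
  fixes n :: nat
  assumes "n \<ge> 8"
  shows "Gn_frakS n < 2 ^ n"
proof -
  let ?t9 = "(transfer ^^ 9) (1, 0, 0, 0)"
  have "Gn_frakS n = fst ((transfer ^^ Suc n) (1, 0, 0, 0))"
    by (simp only: Gn_frakS_eq_end_sum funpow_transfer_eq_end_sums fst_conv)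
  also have "Suc n = (n - 8) + 9"
    using assms by simp
  also have "fst ((transfer ^^ ((n - 8) + 9)) (1, 0, 0, 0)) = fst ((transfer ^^ (n - 8)) ?t9)"
    by (simp only: funpow_add comp_apply)
  also have "\<dots> \<le> 2 ^ (n - 8) * (32065/128)"
    using fst_funpow_transfer_le[of ?t9] by (simp add: funpow_transfer_9 perron_cone_def)
  also have "\<dots> < 2 ^ (n - 8) * 2 ^ 8"
    by simp
  also have "\<dots> = 2 ^ n"
    using assms by (metis le_add_diff_inverse2 power_add)
  finally show ?thesis .
qed

end
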